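(* For each $p$, let $n=n(p)$ and let $r_1,\dots,r_n$ be independent random vectors in $\mathbb{R}^p$; let $M=\sum_{i=1}^nr_ir_i^*$ and $m_p(z)=\frac1p\operatorname{trace}((M-z\,\mathrm{Id}_p)^{-1})$. Assume $p/n$ remains bounded away from $0$. Then for every $z\in\mathbb{C}^+$, $m_p(z)-\mathbf{E}(m_p(z))\to0$ a.s., and moreover, for every $\alpha>0$, $$\frac{\sqrt p}{(\log p)^{(1+\alpha)/2}}\,|m_p(z)-\mathbf{E}(m_p(z))|\to0\quad\text{a.s.}$$
   Context: $\mathbb{C}^+=\{z\in\mathbb{C}:\operatorname{Im}z>0\}$. *)

theory Defs
  imports "HOL-Probability.Probability" "Jordan_Normal_Form.Matrix"
begin

definition mat_trace :: "'a::comm_monoid_add mat \<Rightarrow> 'a" where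
  "mat_trace A = (\<Sum>i<dim_row A. A $$ (i,i))"

definition mat_inv :: "'a::semiring_1 mat \<Rightarrow> 'a mat" where
  "mat_inv A = (THE B. B \<in> carrier_mat (dim_row A) (dim_row A) \<and>
                        A * B = 1\<^sub>m (dim_row A) \<and> B * A = 1\<^sub>m (dim_row A))"

text \<open>The p x p matrix M = sum_{i<n} r_i r_i^*, for real vectors r_i in R^p
  (given as functions, only coordinates < p matter).\<close>
definition sample_mat :: "nat \<Rightarrow> nat \<Rightarrow> (nat \<Rightarrow> nat \<Rightarrow> real) \<Rightarrow> real mat" where
  "sample_mat p n r = mat p p (\<lambda>(j,k). \<Sum>i<n. r i j * r i k)"

definition stieltjes_tr :: "nat \<Rightarrow> real mat \<Rightarrow> complex \<Rightarrow> complex" where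
  "stieltjes_tr p M z =
     mat_trace (mat_inv (map_mat complex_of_real M - z \<cdot>\<^sub>m 1\<^sub>m p)) / of_nat p"

end

theory Submission
  imports Defs "Jordan_Normal_Form.Determinant" "HOL-Real_Asymp.Real_Asymp"
begin

(*
  The deviation m_p(z) - E m_p(z) is a function of the independent sample vectors r_1, ..., r_n.
  Replacing one r_i changes M by two rank-one updates, and by the Sherman-Morrison formula a
  rank-one update of a real symmetric matrix moves trace ((M - z Id)^-1) by at most 1 / Im z.
  So m_p has bounded differences 2 / (p Im z), and McDiarmid's inequality (Hoeffding's lemma
  applied while integrating out one coordinate at a time) gives
    P (|m_p - E m_p| >= t) <= 4 exp (- c (Im z)^2 t^2 p / 32)   whenever p / n >= c.
  For t = eps (ln p)^((1 + alpha)/2) / sqrt p these probabilities are O(p^-2), hence summable,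
  and the Borel-Cantelli lemma yields both almost sure statements.
*)

unbundle no vec_syntax
unbundle no inner_syntax

section \<open>McDiarmid's inequality\<close>

lemma (in prob_space) integrable_of_bounded:
  fixes f :: "'a \<Rightarrow> real"
  assumes "f \<in> borel_measurable M" and "\<And>x. x \<in> space M \<Longrightarrow> \<bar>f x\<bar> \<le> B"
  shows "integrable M f"
  using assms by (intro integrable_const_bound[where B = B]) (auto intro!: AE_I2)

lemma (in prob_space) abs_expectation_le_of_bounded:
  fixes f :: "'a \<Rightarrow> real"
  assumes f: "f \<in> borel_measurable M" and B: "\<And>x. x \<in> space M \<Longrightarrow> \<bar>f x\<bar> \<le> B"
  shows "\<bar>expectation f\<bar> \<le> B"
proof -
  have "\<bar>expectation f\<bar> \<le> expectation (\<lambda>x. \<bar>f x\<bar>)"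
    by (rule integral_abs_bound)
  also have "\<dots> \<le> B"
    using integrable_of_bounded[OF f B] B by (intro integral_le_const) (auto intro!: AE_I2)
  finally show ?thesis .
qed

lemma (in prob_space) Hoeffdings_lemma_oscillation:
  fixes f :: "'a \<Rightarrow> real"
  assumes f: "f \<in> borel_measurable M"
    and osc: "\<And>x y. x \<in> space M \<Longrightarrow> y \<in> space M \<Longrightarrow> \<bar>f x - f y\<bar> \<le> c" and l: "l > 0"
  shows "(\<integral>\<^sup>+x. exp (l * (f x - expectation f)) \<partial>M) \<le> exp (l\<^sup>2 * c\<^sup>2 / 2)"
proof -
  obtain y0 where y0: "y0 \<in> space M" using not_empty by blast
  interpret interval_bounded_random_variable M f "f y0 - c" "f y0 + c"
  proof
    show "AE x in M. f x \<in> {f y0 - c..f y0 + c}"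
    proof (rule AE_I2)
      fix x assume "x \<in> space M"
      then show "f x \<in> {f y0 - c..f y0 + c}" using osc[of x y0] y0 by (auto simp: abs_le_iff)
    qed
  qed (fact f)
  have "l\<^sup>2 * (f y0 + c - (f y0 - c))\<^sup>2 / 8 = l\<^sup>2 * c\<^sup>2 / 2"
    by (simp add: power2_eq_square algebra_simps)
  then show ?thesis using Hoeffdings_lemma_nn_integral[OF l] by (simp add: mult.commute)
qed

definition bounded_differences ::
    "'i set \<Rightarrow> ('i \<Rightarrow> 'b measure) \<Rightarrow> ('i \<Rightarrow> real) \<Rightarrow> (('i \<Rightarrow> 'b) \<Rightarrow> 'c::real_normed_vector) \<Rightarrow> bool"
  where "bounded_differences I M c f \<longleftrightarrow>
    (\<forall>i\<in>I. \<forall>x\<in>space (PiM I M). \<forall>y\<in>space (M i). norm (f x - f (x(i := y))) \<le> c i)"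

lemma bounded_differencesD:
  "bounded_differences I M c f \<Longrightarrow> i \<in> I \<Longrightarrow> x \<in> space (PiM I M) \<Longrightarrow> y \<in> space (M i) \<Longrightarrow>
     norm (f x - f (x(i := y))) \<le> c i"
  unfolding bounded_differences_def by blast

lemma bounded_differences_linear_image:
  assumes bd: "bounded_differences I M c f" and h: "linear h" and "\<And>a. norm (h a) \<le> norm a"
  shows "bounded_differences I M c (\<lambda>x. h (f x))"
  unfolding bounded_differences_def
proof (intro ballI)
  fix i x y assume "i \<in> I" "x \<in> space (PiM I M)" "y \<in> space (M i)"
  then have "norm (f x - f (x(i := y))) \<le> c i" by (rule bounded_differencesD[OF bd])
  then show "norm (h (f x) - h (f (x(i := y)))) \<le> c i"
    using assms(3)[of "f x - f (x(i := y))"] by (simp add: linear_diff[OF h])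
qed

lemma space_PiM_fun_upd:
  "x \<in> space (PiM I M) \<Longrightarrow> y \<in> space (M i) \<Longrightarrow> x(i := y) \<in> space (PiM (insert i I) M)"
  using measurable_space[OF measurable_add_dim, of "(x, y)" I M i] by (simp add: space_pair_measure)

context
  fixes M :: "nat \<Rightarrow> 'b measure"
  assumes prob_space_M: "\<And>i. prob_space (M i)"
begin

lemma prob_space_PiM_M: "prob_space (PiM I M)"
  by (simp add: prob_space_M prob_space_PiM)

lemma marginal_bounded_differences:
  fixes f :: "(nat \<Rightarrow> 'b) \<Rightarrow> real"
  assumes f: "f \<in> borel_measurable (PiM (insert k I) M)"
    and B: "\<And>x. x \<in> space (PiM (insert k I) M) \<Longrightarrow> \<bar>f x\<bar> \<le> B"
    and bd: "bounded_differences (insert k I) M c f" and k: "k \<notin> I"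
  defines "g \<equiv> \<lambda>x. \<integral>y. f (x(k := y)) \<partial>M k"
  shows "g \<in> borel_measurable (PiM I M)"
    and "\<And>x. x \<in> space (PiM I M) \<Longrightarrow> \<bar>g x\<bar> \<le> B"
    and "bounded_differences I M c g"
proof -
  interpret Mk: prob_space "M k" by (rule prob_space_M)
  have joint: "(\<lambda>(x, y). f (x(k := y))) \<in> borel_measurable (PiM I M \<Otimes>\<^sub>M M k)"
    using measurable_comp[OF measurable_add_dim f] by (simp add: comp_def case_prod_unfold)
  have slice: "(\<lambda>y. f (x(k := y))) \<in> borel_measurable (M k)" if "x \<in> space (PiM I M)" for x
    using measurable_Pair2[OF joint that] by simp
  have integrable_slice: "integrable (M k) (\<lambda>y. f (x(k := y)))" if x: "x \<in> space (PiM I M)" for x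
    by (intro Mk.integrable_of_bounded[OF slice[OF x], where B = B] B space_PiM_fun_upd x)
  show "g \<in> borel_measurable (PiM I M)"
    unfolding g_def by (rule Mk.borel_measurable_lebesgue_integral[OF joint])
  show "\<bar>g x\<bar> \<le> B" if x: "x \<in> space (PiM I M)" for x
    unfolding g_def using x by (intro Mk.abs_expectation_le_of_bounded slice B space_PiM_fun_upd)
  show "bounded_differences I M c g"
    unfolding bounded_differences_def real_norm_def
  proof (intro ballI)
    fix i x y assume i: "i \<in> I" and x: "x \<in> space (PiM I M)" and y: "y \<in> space (M i)"
    have x': "x(i := y) \<in> space (PiM I M)"
      using space_PiM_fun_upd[OF x y] i by (simp add: insert_absorb)
    have "g x - g (x(i := y)) = (\<integral>w. f (x(k := w)) - f ((x(i := y))(k := w)) \<partial>M k)"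
      unfolding g_def using x x'
      by (intro Bochner_Integration.integral_diff[symmetric] integrable_slice)
    also have "\<bar>\<dots>\<bar> \<le> c i"
    proof (intro Mk.abs_expectation_le_of_bounded)
      fix w assume w: "w \<in> space (M k)"
      have "(x(i := y))(k := w) = (x(k := w))(i := y)"
        using i k by (auto simp: fun_upd_twist)
      then show "\<bar>f (x(k := w)) - f ((x(i := y))(k := w))\<bar> \<le> c i"
        using bounded_differencesD[OF bd _ space_PiM_fun_upd[OF x w] y] i by simp
    qed (use slice[OF x] slice[OF x'] in measurable)
    finally show "\<bar>g x - g (x(i := y))\<bar> \<le> c i" .
  qed
qed

text \<open>Integrate out coordinate \<open>k\<close> first and apply Hoeffding's lemma to the conditional
  moment generating function.\<close>
lemma McDiarmid_mgf_insert:
  fixes f :: "(nat \<Rightarrow> 'b) \<Rightarrow> real"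
  assumes f: "f \<in> borel_measurable (PiM (insert k I) M)"
    and B: "\<And>x. x \<in> space (PiM (insert k I) M) \<Longrightarrow> \<bar>f x\<bar> \<le> B"
    and bd: "bounded_differences (insert k I) M c f"
    and I: "finite I" "k \<notin> I" and l: "l > 0"
  defines "g \<equiv> \<lambda>x. \<integral>y. f (x(k := y)) \<partial>M k"
  shows "(\<integral>\<^sup>+x. exp (l * (f x - (\<integral>y. f y \<partial>PiM (insert k I) M))) \<partial>PiM (insert k I) M)
           \<le> (\<integral>\<^sup>+x. exp (l * (g x - (\<integral>y. g y \<partial>PiM I M))) \<partial>PiM I M) * exp (l\<^sup>2 * (c k)\<^sup>2 / 2)"
proof -
  interpret product_prob_space M
    by (simp add: prob_space_M product_prob_space_def product_prob_space_axioms_def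
        product_sigma_finite_def prob_space_imp_sigma_finite)
  have g: "g \<in> borel_measurable (PiM I M)"
    using marginal_bounded_differences(1)[OF f B bd I(2)] by (simp add: g_def)
  define Eg where "Eg = (\<integral>x. g x \<partial>PiM I M)"
  have Ef: "(\<integral>x. f x \<partial>PiM (insert k I) M) = Eg"
    unfolding Eg_def g_def using I
    by (intro product_integral_insert prob_space.integrable_of_bounded[OF prob_space_PiM_M f B])
  have joint: "(\<lambda>(x, y). f (x(k := y))) \<in> borel_measurable (PiM I M \<Otimes>\<^sub>M M k)"
    using measurable_comp[OF measurable_add_dim f] by (simp add: comp_def case_prod_unfold)
  have conditional: "(\<integral>\<^sup>+y. exp (l * (f (x(k := y)) - g x)) \<partial>M k) \<le> exp (l\<^sup>2 * (c k)\<^sup>2 / 2)"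
    if x: "x \<in> space (PiM I M)" for x
    unfolding g_def
  proof (rule prob_space.Hoeffdings_lemma_oscillation[OF prob_space_M measurable_Pair2[OF joint x, simplified] _ l])
    fix y y' assume "y \<in> space (M k)" "y' \<in> space (M k)"
    then show "\<bar>f (x(k := y)) - f (x(k := y'))\<bar> \<le> c k"
      using bounded_differencesD[OF bd _ space_PiM_fun_upd[OF x], of k y y'] by simp
  qed
  have "(\<integral>\<^sup>+x. exp (l * (f x - Eg)) \<partial>PiM (insert k I) M)
      = (\<integral>\<^sup>+x. (\<integral>\<^sup>+y. exp (l * (f (x(k := y)) - Eg)) \<partial>M k) \<partial>PiM I M)"
    using f I by (intro product_nn_integral_insert) auto
  also have "\<dots> = (\<integral>\<^sup>+x. exp (l * (g x - Eg)) * (\<integral>\<^sup>+y. exp (l * (f (x(k := y)) - g x)) \<partial>M k) \<partial>PiM I M)"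
  proof (intro nn_integral_cong)
    fix x assume x: "x \<in> space (PiM I M)"
    have "(\<integral>\<^sup>+y. exp (l * (f (x(k := y)) - Eg)) \<partial>M k)
        = (\<integral>\<^sup>+y. ennreal (exp (l * (g x - Eg))) * exp (l * (f (x(k := y)) - g x)) \<partial>M k)"
      by (intro nn_integral_cong) (simp add: mult_exp_exp algebra_simps flip: ennreal_mult)
    also have "\<dots> = exp (l * (g x - Eg)) * (\<integral>\<^sup>+y. exp (l * (f (x(k := y)) - g x)) \<partial>M k)"
      using measurable_Pair2[OF joint x] by (intro nn_integral_cmult) auto
    finally show "(\<integral>\<^sup>+y. exp (l * (f (x(k := y)) - Eg)) \<partial>M k)
        = exp (l * (g x - Eg)) * (\<integral>\<^sup>+y. exp (l * (f (x(k := y)) - g x)) \<partial>M k)" .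
  qed
  also have "\<dots> \<le> (\<integral>\<^sup>+x. exp (l * (g x - Eg)) * ennreal (exp (l\<^sup>2 * (c k)\<^sup>2 / 2)) \<partial>PiM I M)"
    by (intro nn_integral_mono mult_left_mono conditional) auto
  also have "\<dots> = (\<integral>\<^sup>+x. exp (l * (g x - Eg)) \<partial>PiM I M) * exp (l\<^sup>2 * (c k)\<^sup>2 / 2)"
    using g by (intro nn_integral_multc) auto
  finally show ?thesis unfolding Ef Eg_def .
qed

lemma McDiarmid_mgf:
  fixes f :: "(nat \<Rightarrow> 'b) \<Rightarrow> real"
  assumes "f \<in> borel_measurable (PiM {..<n} M)"
    and "\<And>x. x \<in> space (PiM {..<n} M) \<Longrightarrow> \<bar>f x\<bar> \<le> B"
    and "bounded_differences {..<n} M c f" and l: "l > 0"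
  shows "(\<integral>\<^sup>+x. exp (l * (f x - (\<integral>y. f y \<partial>PiM {..<n} M))) \<partial>PiM {..<n} M)
           \<le> exp (l\<^sup>2 * (\<Sum>i<n. (c i)\<^sup>2) / 2)"
  using assms(1-3)
proof (induction n arbitrary: f)
  case 0
  then show ?case by (simp add: PiM_empty nn_integral_count_space_finite lebesgue_integral_count_space_finite)
next
  case (Suc n)
  have ins: "{..<Suc n} = insert n {..<n}" by auto
  have f: "f \<in> borel_measurable (PiM (insert n {..<n}) M)"
    and B: "\<And>x. x \<in> space (PiM (insert n {..<n}) M) \<Longrightarrow> \<bar>f x\<bar> \<le> B"
    and bd: "bounded_differences (insert n {..<n}) M c f"
    using Suc.prems by (simp_all only: ins)
  have n: "n \<notin> {..<n}" by simp
  define g where "g = (\<lambda>x. \<integral>y. f (x(n := y)) \<partial>M n)"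
  have marginal: "g \<in> borel_measurable (PiM {..<n} M)"
    "\<And>x. x \<in> space (PiM {..<n} M) \<Longrightarrow> \<bar>g x\<bar> \<le> B" "bounded_differences {..<n} M c g"
    using marginal_bounded_differences[OF f B bd] unfolding g_def by auto
  have "(\<integral>\<^sup>+x. exp (l * (f x - (\<integral>y. f y \<partial>PiM {..<Suc n} M))) \<partial>PiM {..<Suc n} M)
      \<le> (\<integral>\<^sup>+x. exp (l * (g x - (\<integral>y. g y \<partial>PiM {..<n} M))) \<partial>PiM {..<n} M) * exp (l\<^sup>2 * (c n)\<^sup>2 / 2)"
    using McDiarmid_mgf_insert[OF f B bd finite_lessThan n l] by (simp only: ins g_def)
  also have "\<dots> \<le> ennreal (exp (l\<^sup>2 * (\<Sum>i<n. (c i)\<^sup>2) / 2)) * exp (l\<^sup>2 * (c n)\<^sup>2 / 2)"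
    by (intro mult_right_mono Suc.IH[OF marginal]) auto
  also have "\<dots> = exp (l\<^sup>2 * (\<Sum>i<Suc n. (c i)\<^sup>2) / 2)"
    by (simp add: ennreal_mult'[symmetric] mult_exp_exp add_divide_distrib algebra_simps)
  finally show ?case .
qed

lemma McDiarmid_inequality_upper:
  fixes f :: "(nat \<Rightarrow> 'b) \<Rightarrow> real"
  assumes f: "f \<in> borel_measurable (PiM {..<n} M)"
    and B: "\<And>x. x \<in> space (PiM {..<n} M) \<Longrightarrow> \<bar>f x\<bar> \<le> B"
    and bd: "bounded_differences {..<n} M c f"
    and S: "(\<Sum>i<n. (c i)\<^sup>2) > 0" and t: "t > 0"
  shows "measure (PiM {..<n} M) {x \<in> space (PiM {..<n} M). t \<le> f x - (\<integral>y. f y \<partial>PiM {..<n} M)}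
           \<le> exp (- t\<^sup>2 / (2 * (\<Sum>i<n. (c i)\<^sup>2)))"
proof -
  let ?P = "PiM {..<n} M" and ?S = "\<Sum>i<n. (c i)\<^sup>2"
  interpret P: prob_space ?P by (rule prob_space_PiM_M)
  define E where "E = (\<integral>y. f y \<partial>?P)"
  define l where "l = t / ?S"
  have l: "l > 0" using S t by (simp add: l_def)
  have "emeasure ?P {x \<in> space ?P. t \<le> f x - E}
      \<le> ennreal (exp (- l * t)) * (\<integral>\<^sup>+x. ennreal (exp (l * (f x - E))) * indicator (space ?P) x \<partial>?P)"
    using f by (intro Chernoff_ineq_nn_integral_ge l) auto
  also have "(\<integral>\<^sup>+x. ennreal (exp (l * (f x - E))) * indicator (space ?P) x \<partial>?P) = (\<integral>\<^sup>+x. exp (l * (f x - E)) \<partial>?P)"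
    by (intro nn_integral_cong) auto
  also have "\<dots> \<le> exp (l\<^sup>2 * ?S / 2)"
    unfolding E_def by (rule McDiarmid_mgf[OF f B bd l])
  finally have "emeasure ?P {x \<in> space ?P. t \<le> f x - E} \<le> ennreal (exp (- l * t) * exp (l\<^sup>2 * ?S / 2))"
    by (simp add: ennreal_mult' mult_left_mono)
  also have "exp (- l * t) * exp (l\<^sup>2 * ?S / 2) = exp (- t\<^sup>2 / (2 * ?S))"
    using S by (simp add: l_def mult_exp_exp power2_eq_square field_simps)
  finally show ?thesis
    unfolding E_def by (simp add: P.emeasure_eq_measure)
qed

lemma McDiarmid_inequality:
  fixes f :: "(nat \<Rightarrow> 'b) \<Rightarrow> real"
  assumes f: "f \<in> borel_measurable (PiM {..<n} M)"
    and B: "\<And>x. x \<in> space (PiM {..<n} M) \<Longrightarrow> \<bar>f x\<bar> \<le> B"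
    and bd: "bounded_differences {..<n} M c f"
    and S: "(\<Sum>i<n. (c i)\<^sup>2) > 0" and t: "t > 0"
  shows "measure (PiM {..<n} M) {x \<in> space (PiM {..<n} M). t \<le> \<bar>f x - (\<integral>y. f y \<partial>PiM {..<n} M)\<bar>}
           \<le> 2 * exp (- t\<^sup>2 / (2 * (\<Sum>i<n. (c i)\<^sup>2)))"
proof -
  let ?P = "PiM {..<n} M" and ?S = "\<Sum>i<n. (c i)\<^sup>2"
  interpret P: prob_space ?P by (rule prob_space_PiM_M)
  have bd': "bounded_differences {..<n} M c (\<lambda>x. - f x)"
    using bd by (simp add: bounded_differences_def abs_minus_commute)
  have "{x \<in> space ?P. t \<le> \<bar>f x - (\<integral>y. f y \<partial>?P)\<bar>}
      = {x \<in> space ?P. t \<le> f x - (\<integral>y. f y \<partial>?P)} \<union> {x \<in> space ?P. t \<le> - f x - (\<integral>y. - f y \<partial>?P)}"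
    by auto
  also have "P.prob \<dots> \<le> P.prob {x \<in> space ?P. t \<le> f x - (\<integral>y. f y \<partial>?P)}
      + P.prob {x \<in> space ?P. t \<le> - f x - (\<integral>y. - f y \<partial>?P)}"
    using f by (intro measure_Un_le) auto
  also have "\<dots> \<le> exp (- t\<^sup>2 / (2 * ?S)) + exp (- t\<^sup>2 / (2 * ?S))"
    using f B bd' by (intro add_mono McDiarmid_inequality_upper[OF _ _ _ S t] bd) auto
  finally show ?thesis by simp
qed

lemma McDiarmid_inequality_complex:
  fixes f :: "(nat \<Rightarrow> 'b) \<Rightarrow> complex"
  assumes f: "f \<in> borel_measurable (PiM {..<n} M)"
    and B: "\<And>x. x \<in> space (PiM {..<n} M) \<Longrightarrow> cmod (f x) \<le> B"
    and bd: "bounded_differences {..<n} M c f"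
    and S: "(\<Sum>i<n. (c i)\<^sup>2) > 0" and t: "t > 0"
  shows "measure (PiM {..<n} M) {x \<in> space (PiM {..<n} M). t \<le> cmod (f x - (\<integral>y. f y \<partial>PiM {..<n} M))}
           \<le> 4 * exp (- t\<^sup>2 / (8 * (\<Sum>i<n. (c i)\<^sup>2)))"
proof -
  let ?P = "PiM {..<n} M" and ?S = "\<Sum>i<n. (c i)\<^sup>2"
  interpret P: prob_space ?P by (rule prob_space_PiM_M)
  have int: "integrable ?P f"
    using f B by (intro P.integrable_const_bound[where B = B]) (auto intro!: AE_I2)
  have Re: "bounded_differences {..<n} M c (\<lambda>x. Re (f x))"
    by (rule bounded_differences_linear_image[OF bd]) (auto simp: bounded_linear.linear[OF bounded_linear_Re] abs_Re_le_cmod)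
  have Im: "bounded_differences {..<n} M c (\<lambda>x. Im (f x))"
    by (rule bounded_differences_linear_image[OF bd]) (auto simp: bounded_linear.linear[OF bounded_linear_Im] abs_Im_le_cmod)
  have "{x \<in> space ?P. t \<le> cmod (f x - (\<integral>y. f y \<partial>?P))}
      \<subseteq> {x \<in> space ?P. t / 2 \<le> \<bar>Re (f x) - (\<integral>y. Re (f y) \<partial>?P)\<bar>}
        \<union> {x \<in> space ?P. t / 2 \<le> \<bar>Im (f x) - (\<integral>y. Im (f y) \<partial>?P)\<bar>}"
  proof (intro subsetI)
    fix x assume "x \<in> {x \<in> space ?P. t \<le> cmod (f x - (\<integral>y. f y \<partial>?P))}"
    then have x: "x \<in> space ?P" and le: "t \<le> cmod (f x - (\<integral>y. f y \<partial>?P))" by auto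
    have "cmod (f x - (\<integral>y. f y \<partial>?P))
        \<le> \<bar>Re (f x) - (\<integral>y. Re (f y) \<partial>?P)\<bar> + \<bar>Im (f x) - (\<integral>y. Im (f y) \<partial>?P)\<bar>"
      using cmod_le[of "f x - (\<integral>y. f y \<partial>?P)"] int by simp
    with x le show "x \<in> {x \<in> space ?P. t / 2 \<le> \<bar>Re (f x) - (\<integral>y. Re (f y) \<partial>?P)\<bar>}
        \<union> {x \<in> space ?P. t / 2 \<le> \<bar>Im (f x) - (\<integral>y. Im (f y) \<partial>?P)\<bar>}"
      by auto
  qed
  then have "P.prob {x \<in> space ?P. t \<le> cmod (f x - (\<integral>y. f y \<partial>?P))}
      \<le> P.prob {x \<in> space ?P. t / 2 \<le> \<bar>Re (f x) - (\<integral>y. Re (f y) \<partial>?P)\<bar>}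
        + P.prob {x \<in> space ?P. t / 2 \<le> \<bar>Im (f x) - (\<integral>y. Im (f y) \<partial>?P)\<bar>}"
    using f by (intro order.trans[OF P.finite_measure_mono measure_Un_le]) auto
  also have "\<dots> \<le> 2 * exp (- (t / 2)\<^sup>2 / (2 * ?S)) + 2 * exp (- (t / 2)\<^sup>2 / (2 * ?S))"
    using f B abs_Re_le_cmod abs_Im_le_cmod t
    by (intro add_mono McDiarmid_inequality[OF _ _ _ S] Re Im) (auto intro: order.trans)
  also have "\<dots> = 4 * exp (- t\<^sup>2 / (8 * ?S))"
    by (simp add: power_divide)
  finally show ?thesis .
qed

end

lemma (in prob_space) McDiarmid_inequality_indep_complex:
  fixes X :: "nat \<Rightarrow> 'a \<Rightarrow> 'b" and N :: "nat \<Rightarrow> 'b measure" and F :: "(nat \<Rightarrow> 'b) \<Rightarrow> complex"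
  assumes indep: "indep_vars N X {..<n}"
    and F: "F \<in> borel_measurable (PiM {..<n} N)"
    and B: "\<And>x. x \<in> space (PiM {..<n} N) \<Longrightarrow> cmod (F x) \<le> B"
    and bd: "bounded_differences {..<n} N c F"
    and S: "(\<Sum>i<n. (c i)\<^sup>2) > 0" and t: "t > 0"
  shows "prob {\<omega> \<in> space M. t \<le> cmod (F (\<lambda>i\<in>{..<n}. X i \<omega>) - expectation (\<lambda>\<omega>. F (\<lambda>i\<in>{..<n}. X i \<omega>)))}
           \<le> 4 * exp (- t\<^sup>2 / (8 * (\<Sum>i<n. (c i)\<^sup>2)))"
proof -
  let ?N = "PiM {..<n} N" and ?Y = "\<lambda>\<omega>. \<lambda>i\<in>{..<n}. X i \<omega>"
  have X: "random_variable (N i) (X i)" if "i < n" for i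
    using indep that unfolding indep_vars_def by blast
  have Y: "?Y \<in> measurable M ?N"
    using X by (intro measurable_restrict) auto
  have "n \<noteq> 0" using S by (intro notI) simp
  \<comment> \<open>Padding with a one-point space makes every factor a probability space.\<close>
  define Q where "Q i = (if i < n then distr M (N i) (X i) else count_space {undefined})" for i
  have prob_Q: "prob_space (Q i)" for i
    using X by (cases "i < n") (auto simp: Q_def prob_space_distr intro!: prob_spaceI)
  have PiQ: "PiM {..<n} Q = distr M ?N ?Y"
  proof -
    have "PiM {..<n} Q = PiM {..<n} (\<lambda>i. distr M (N i) (X i))"
      by (intro PiM_cong) (auto simp: Q_def)
    also have "\<dots> = distr M ?N ?Y"
      using indep_vars_iff_distr_eq_PiM'[of "{..<n}" X N] \<open>n \<noteq> 0\<close> X indep by (simp add: lessThan_empty_iff)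
    finally show ?thesis .
  qed
  have space_Q: "space (Q i) = space (N i)" if "i < n" for i
    using that by (simp add: Q_def)
  have bd_Q: "bounded_differences {..<n} Q c F"
    using bd by (simp add: bounded_differences_def PiQ space_Q)
  have F_Q: "F \<in> borel_measurable (PiM {..<n} Q)"
    using F by (simp add: PiQ)
  have "measure (PiM {..<n} Q) {x \<in> space (PiM {..<n} Q). t \<le> cmod (F x - (\<integral>y. F y \<partial>PiM {..<n} Q))}
      \<le> 4 * exp (- t\<^sup>2 / (8 * (\<Sum>i<n. (c i)\<^sup>2)))"
    using B by (intro McDiarmid_inequality_complex[OF prob_Q F_Q _ bd_Q S t]) (auto simp: PiQ)
  moreover have "measure (PiM {..<n} Q) {x \<in> space (PiM {..<n} Q). t \<le> cmod (F x - (\<integral>y. F y \<partial>PiM {..<n} Q))}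
      = prob {\<omega> \<in> space M. t \<le> cmod (F (?Y \<omega>) - expectation (\<lambda>\<omega>. F (?Y \<omega>)))}"
    unfolding PiQ integral_distr[OF Y F] using Y F
    by (subst measure_distr) (auto intro!: arg_cong[where f = prob] dest: measurable_space)
  ultimately show ?thesis by simp
qed

section \<open>Resolvents of real symmetric matrices\<close>

definition shifted_mat :: "nat \<Rightarrow> complex \<Rightarrow> real mat \<Rightarrow> complex mat" where
  "shifted_mat p z S = map_mat complex_of_real S - z \<cdot>\<^sub>m 1\<^sub>m p"

lemma dim_shifted_mat [simp]: "dim_row (shifted_mat p z S) = p" "dim_col (shifted_mat p z S) = p"
  by (simp_all only: shifted_mat_def index_minus_mat index_smult_mat index_one_mat)

lemma shifted_mat_carrier [simp]: "shifted_mat p z S \<in> carrier_mat p p"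
  by (rule carrier_matI) simp_all

lemma shifted_mat_index [simp]:
  assumes "S \<in> carrier_mat p p" "j < p" "k < p"
  shows "shifted_mat p z S $$ (j, k) = complex_of_real (S $$ (j, k)) - (if j = k then z else 0)"
  using assms by (simp add: shifted_mat_def index_minus_mat)

lemma symmetric_mat_index:
  assumes "transpose_mat S = S" "S \<in> carrier_mat p p" "j < p" "k < p"
  shows "S $$ (j, k) = S $$ (k, j)"
proof -
  have "S $$ (j, k) = transpose_mat S $$ (j, k)" using assms(1) by simp
  also have "\<dots> = S $$ (k, j)" using assms(2-4) by simp
  finally show ?thesis .
qed

lemma transpose_shifted_mat:
  assumes "S \<in> carrier_mat p p" "transpose_mat S = S"
  shows "transpose_mat (shifted_mat p z S) = shifted_mat p z S"
proof (rule eq_matI)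
  fix j k assume "j < dim_row (shifted_mat p z S)" "k < dim_col (shifted_mat p z S)"
  then have j: "j < p" and k: "k < p" by auto
  then show "transpose_mat (shifted_mat p z S) $$ (j, k) = shifted_mat p z S $$ (j, k)"
    using assms(1) symmetric_mat_index[OF assms(2,1) k j] by (simp add: index_transpose_mat)
qed auto

lemma shifted_mat_mult_vec_index:
  assumes S: "S \<in> carrier_mat p p" and y: "y \<in> carrier_vec p" and k: "k < p"
  shows "(shifted_mat p z S *\<^sub>v y) $ k = (\<Sum>l<p. complex_of_real (S $$ (k, l)) * y $ l) - z * y $ k"
proof -
  have "(shifted_mat p z S *\<^sub>v y) $ k = (\<Sum>l<p. (complex_of_real (S $$ (k, l)) - (if k = l then z else 0)) * y $ l)"
    using S y k by (auto simp: scalar_prod_def lessThan_atLeast0 intro!: sum.cong)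
  also have "\<dots> = (\<Sum>l<p. complex_of_real (S $$ (k, l)) * y $ l) - (\<Sum>l<p. (if k = l then z else 0) * y $ l)"
    by (simp add: algebra_simps sum_subtractf)
  also have "(\<Sum>l<p. (if k = l then z else 0) * y $ l) = (\<Sum>l<p. if k = l then z * y $ l else 0)"
    by (rule sum.cong) auto
  finally show ?thesis using k by simp
qed

text \<open>For real symmetric \<open>S\<close> the form \<open>y\<^sup>* S y\<close> is real, so only \<open>- z y\<^sup>* y\<close> contributes an imaginary part.\<close>
lemma Im_quadratic_form_shifted_mat:
  assumes S: "S \<in> carrier_mat p p" "transpose_mat S = S" and y: "y \<in> carrier_vec p"
  shows "Im (\<Sum>k<p. cnj (y $ k) * (shifted_mat p z S *\<^sub>v y) $ k) = - Im z * (\<Sum>k<p. (cmod (y $ k))\<^sup>2)"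
proof -
  define w where "w = (\<Sum>k<p. \<Sum>l<p. complex_of_real (S $$ (k, l)) * (cnj (y $ k) * y $ l))"
  have "cnj w = (\<Sum>l<p. \<Sum>k<p. complex_of_real (S $$ (k, l)) * (cnj (y $ l) * y $ k))"
    unfolding w_def by (subst sum.swap) (simp add: mult_ac)
  also have "\<dots> = w"
    unfolding w_def
  proof (intro sum.cong refl)
    fix k l assume "k \<in> {..<p}" "l \<in> {..<p}"
    then show "complex_of_real (S $$ (l, k)) * (cnj (y $ k) * y $ l)
        = complex_of_real (S $$ (k, l)) * (cnj (y $ k) * y $ l)"
      using symmetric_mat_index[OF S(2,1), of l k] by simp
  qed
  finally have "Im w = 0"
    by (metis cnj.simps(2) neg_equal_zero)
  have "(\<Sum>k<p. cnj (y $ k) * (shifted_mat p z S *\<^sub>v y) $ k)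
      = (\<Sum>k<p. cnj (y $ k) * ((\<Sum>l<p. complex_of_real (S $$ (k, l)) * y $ l) - z * y $ k))"
    by (intro sum.cong refl) (simp only: lessThan_iff shifted_mat_mult_vec_index[OF S(1) y])
  also have "\<dots> = w - z * (\<Sum>k<p. cnj (y $ k) * y $ k)"
    unfolding w_def by (simp add: algebra_simps sum_subtractf sum_distrib_left)
  also have "(\<Sum>k<p. cnj (y $ k) * y $ k) = (\<Sum>k<p. complex_of_real ((cmod (y $ k))\<^sup>2))"
    by (rule sum.cong[OF refl], subst complex_norm_square, rule mult.commute)
  finally show ?thesis using \<open>Im w = 0\<close> by simp
qed

lemma det_shifted_mat_nonzero:
  assumes S: "S \<in> carrier_mat p p" "transpose_mat S = S" and z: "Im z \<noteq> 0"
  shows "det (shifted_mat p z S) \<noteq> 0"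
proof
  assume "det (shifted_mat p z S) = 0"
  then obtain v where v: "v \<in> carrier_vec p" "v \<noteq> 0\<^sub>v p" "shifted_mat p z S *\<^sub>v v = 0\<^sub>v p"
    using det_0_iff_vec_prod_zero[OF shifted_mat_carrier] by blast
  have "Im z * (\<Sum>k<p. (cmod (v $ k))\<^sup>2) = 0"
    using Im_quadratic_form_shifted_mat[OF S v(1), of z] v(3) by simp
  then have "(\<Sum>k<p. (cmod (v $ k))\<^sup>2) = 0" using z by simp
  then have "\<forall>k\<in>{..<p}. (cmod (v $ k))\<^sup>2 = 0"
    by (subst (asm) sum_nonneg_eq_0_iff) (auto simp del: norm_eq_zero)
  then have "v = 0\<^sub>v p" using v(1) by (auto intro!: eq_vecI)
  with v(2) show False by simp
qed

lemma mat_inv_eqI: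
  assumes A: "A \<in> carrier_mat n n" and B: "B \<in> carrier_mat n n"
    and AB: "A * B = 1\<^sub>m n" and BA: "B * A = 1\<^sub>m n"
  shows "mat_inv A = B"
  unfolding mat_inv_def
proof (rule the_equality)
  fix C assume "C \<in> carrier_mat (dim_row A) (dim_row A) \<and> A * C = 1\<^sub>m (dim_row A) \<and> C * A = 1\<^sub>m (dim_row A)"
  then have C: "C \<in> carrier_mat n n" and CA: "C * A = 1\<^sub>m n" using A by auto
  have "C = C * (A * B)" using C AB by simp
  also have "\<dots> = (C * A) * B" using C A B by simp
  finally show "C = B" using CA B by simp
qed (use assms in auto)

lemma mat_inv_adj_mat:
  fixes A :: "'a :: field mat"
  assumes A: "A \<in> carrier_mat n n" and d: "det A \<noteq> 0"
  shows "mat_inv A = (1 / det A) \<cdot>\<^sub>m adj_mat A"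
proof (rule mat_inv_eqI[OF A])
  have adj: "adj_mat A \<in> carrier_mat n n" "A * adj_mat A = det A \<cdot>\<^sub>m 1\<^sub>m n" "adj_mat A * A = det A \<cdot>\<^sub>m 1\<^sub>m n"
    using adj_mat[OF A] by auto
  show "(1 / det A) \<cdot>\<^sub>m adj_mat A \<in> carrier_mat n n" using adj by simp
  show "A * ((1 / det A) \<cdot>\<^sub>m adj_mat A) = 1\<^sub>m n"
    using mult_smult_distrib[OF A adj(1)] adj(2) d by (auto intro!: eq_matI)
  show "(1 / det A) \<cdot>\<^sub>m adj_mat A * A = 1\<^sub>m n"
    using mult_smult_assoc_mat[OF adj(1) A] adj(3) d by (auto intro!: eq_matI)
qed

lemma mat_inv_nonsingular:
  fixes A :: "'a :: field mat"
  assumes A: "A \<in> carrier_mat n n" and d: "det A \<noteq> 0"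
  shows "mat_inv A \<in> carrier_mat n n" "A * mat_inv A = 1\<^sub>m n" "mat_inv A * A = 1\<^sub>m n"
proof -
  have adj: "adj_mat A \<in> carrier_mat n n" "A * adj_mat A = det A \<cdot>\<^sub>m 1\<^sub>m n" "adj_mat A * A = det A \<cdot>\<^sub>m 1\<^sub>m n"
    using adj_mat[OF A] by auto
  show "mat_inv A \<in> carrier_mat n n" "A * mat_inv A = 1\<^sub>m n" "mat_inv A * A = 1\<^sub>m n"
    unfolding mat_inv_adj_mat[OF A d]
    using adj mult_smult_distrib[OF A adj(1)] mult_smult_assoc_mat[OF adj(1) A] d
    by (auto intro!: eq_matI)
qed

lemma mat_inv_transpose_symmetric:
  fixes A :: "'a :: field mat"
  assumes A: "A \<in> carrier_mat n n" "transpose_mat A = A" and d: "det A \<noteq> 0"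
  shows "transpose_mat (mat_inv A) = mat_inv A"
proof -
  note inv = mat_inv_nonsingular[OF A(1) d]
  have "mat_inv A = transpose_mat (mat_inv A)"
  proof (rule mat_inv_eqI[OF A(1)])
    show "A * transpose_mat (mat_inv A) = 1\<^sub>m n"
      by (metis A(2) inv(1,3) transpose_mult transpose_one A(1))
    show "transpose_mat (mat_inv A) * A = 1\<^sub>m n"
      by (metis A(2) inv(1,2) transpose_mult transpose_one A(1))
  qed (use inv(1) in auto)
  then show ?thesis by simp
qed

lemma mat_inv_shifted_mat:
  assumes S: "S \<in> carrier_mat p p" "transpose_mat S = S" and z: "Im z \<noteq> 0"
  shows "mat_inv (shifted_mat p z S) \<in> carrier_mat p p"
    and "shifted_mat p z S * mat_inv (shifted_mat p z S) = 1\<^sub>m p"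
    and "mat_inv (shifted_mat p z S) * shifted_mat p z S = 1\<^sub>m p"
    and "transpose_mat (mat_inv (shifted_mat p z S)) = mat_inv (shifted_mat p z S)"
  using mat_inv_nonsingular[OF shifted_mat_carrier det_shifted_mat_nonzero[OF S z]]
    mat_inv_transpose_symmetric[OF shifted_mat_carrier transpose_shifted_mat[OF S] det_shifted_mat_nonzero[OF S z]]
  by auto

lemma Im_bilinear_form_mat_inv_shifted_mat:
  fixes u :: "real vec"
  assumes S: "S \<in> carrier_mat p p" "transpose_mat S = S" and z: "Im z \<noteq> 0" and u: "u \<in> carrier_vec p"
  defines "y \<equiv> mat_inv (shifted_mat p z S) *\<^sub>v map_vec complex_of_real u"
  shows "Im (map_vec complex_of_real u \<bullet> y) = Im z * (\<Sum>k<p. (cmod (y $ k))\<^sup>2)"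
proof -
  note inv = mat_inv_shifted_mat[OF S z]
  let ?uc = "map_vec complex_of_real u"
  have uc: "?uc \<in> carrier_vec p" and yc: "y \<in> carrier_vec p"
    using inv(1) u by (auto simp: y_def)
  define w where "w = shifted_mat p z S *\<^sub>v y"
  have w: "w = ?uc"
    unfolding w_def y_def using inv(1,2) uc
    by (metis assoc_mult_mat_vec one_mult_mat_vec shifted_mat_carrier)
  have "?uc \<bullet> y = (\<Sum>k<p. cnj (w $ k) * y $ k)"
    using yc u by (simp add: w scalar_prod_def lessThan_atLeast0)
  also have "\<dots> = cnj (\<Sum>k<p. cnj (y $ k) * w $ k)"
    by (simp add: mult.commute)
  finally have "Im (?uc \<bullet> y) = - Im (\<Sum>k<p. cnj (y $ k) * w $ k)"
    by (simp only: cnj.sel)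
  also have "\<dots> = Im z * (\<Sum>k<p. (cmod (y $ k))\<^sup>2)"
    by (simp only: Im_quadratic_form_shifted_mat[OF S yc, of z, folded w_def] mult_minus_left minus_minus)
  finally show ?thesis .
qed

lemma cmod_diag_mat_inv_shifted_mat_le:
  assumes S: "S \<in> carrier_mat p p" "transpose_mat S = S" and z: "Im z > 0" and i: "i < p"
  shows "cmod (mat_inv (shifted_mat p z S) $$ (i, i)) \<le> 1 / Im z"
proof -
  define R where "R = mat_inv (shifted_mat p z S)"
  define y where "y = R *\<^sub>v map_vec complex_of_real (unit_vec p i)"
  have R: "R \<in> carrier_mat p p" using mat_inv_shifted_mat(1)[OF S] z by (simp add: R_def)
  have unit: "map_vec complex_of_real (unit_vec p i) = unit_vec p i"
    by (intro eq_vecI) (auto simp: unit_vec_def)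
  have yc: "y \<in> carrier_vec p" using R by (simp add: y_def)
  have yk: "y $ k = R $$ (k, i)" if "k < p" for k
    using that i R by (simp add: y_def unit)
  define N where "N = (\<Sum>k<p. (cmod (y $ k))\<^sup>2)"
  have "map_vec complex_of_real (unit_vec p i) \<bullet> y = R $$ (i, i)"
    using yc i yk by (simp add: unit)
  then have ImR: "Im (R $$ (i, i)) = Im z * N"
    using Im_bilinear_form_mat_inv_shifted_mat[OF S _ unit_vec_carrier, of z i] z
    unfolding N_def y_def R_def by simp
  have "(cmod (R $$ (i, i)))\<^sup>2 \<le> N"
    using member_le_sum[of i "{..<p}" "\<lambda>k. (cmod (y $ k))\<^sup>2"] i yk[OF i] by (simp add: N_def)
  then have "Im z * (cmod (R $$ (i, i)))\<^sup>2 \<le> Im (R $$ (i, i))"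
    unfolding ImR using z by simp
  also have "\<dots> \<le> cmod (R $$ (i, i))"
    using abs_Im_le_cmod by (rule abs_le_D1)
  finally have "Im z * (cmod (R $$ (i, i)))\<^sup>2 \<le> cmod (R $$ (i, i))" .
  then have "Im z * cmod (R $$ (i, i)) \<le> 1 \<or> cmod (R $$ (i, i)) = 0"
    by (auto simp: power2_eq_square mult.assoc[symmetric] mult_le_cancel_right1)
  then show ?thesis
    using z unfolding R_def by (auto simp: field_simps)
qed

lemma cmod_trace_mat_inv_shifted_mat_le:
  assumes S: "S \<in> carrier_mat p p" "transpose_mat S = S" and z: "Im z > 0"
  shows "cmod (mat_trace (mat_inv (shifted_mat p z S))) \<le> real p / Im z"
proof -
  have "mat_inv (shifted_mat p z S) \<in> carrier_mat p p"
    using mat_inv_shifted_mat(1)[OF S] z by simp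
  then have "cmod (mat_trace (mat_inv (shifted_mat p z S))) = cmod (\<Sum>i<p. mat_inv (shifted_mat p z S) $$ (i, i))"
    by (simp add: mat_trace_def)
  also have "\<dots> \<le> (\<Sum>i<p. cmod (mat_inv (shifted_mat p z S) $$ (i, i)))"
    by (rule norm_sum)
  also have "\<dots> \<le> (\<Sum>i<p. 1 / Im z)"
    by (intro sum_mono cmod_diag_mat_inv_shifted_mat_le[OF S z]) simp
  finally show ?thesis by simp
qed

lemma mat_inv_difference:
  fixes A A' B B' :: "'a :: comm_ring_1 mat"
  assumes A: "A \<in> carrier_mat n n" and A': "A' \<in> carrier_mat n n"
    and B: "B \<in> carrier_mat n n" and B': "B' \<in> carrier_mat n n"
    and BA: "B * A = 1\<^sub>m n" and A'B': "A' * B' = 1\<^sub>m n"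
  shows "B - B' = B * ((A' - A) * B')"
proof -
  have "B * ((A' - A) * B') = B * (A' * B' - A * B')"
    using A A' B' by (simp add: minus_mult_distrib_mat)
  also have "\<dots> = B * (A' * B') - B * (A * B')"
    using A A' B B' by (intro mult_minus_distrib_mat) auto
  also have "B * (A * B') = (B * A) * B'"
    using A B B' by (simp add: assoc_mult_mat)
  finally show ?thesis
    using B B' by (simp add: BA A'B')
qed

lemma outer_mult_symmetric_mat:
  fixes v :: "'a :: comm_semiring_1 vec"
  assumes B: "B \<in> carrier_mat n n" "transpose_mat B = B" and v: "v \<in> carrier_vec n"
  shows "mat n n (\<lambda>(j, k). v $ j * v $ k) * B = mat n n (\<lambda>(j, k). v $ j * (B *\<^sub>v v) $ k)"
proof (rule eq_matI)
  fix j k assume "j < dim_row (mat n n (\<lambda>(j, k). v $ j * (B *\<^sub>v v) $ k))"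
    "k < dim_col (mat n n (\<lambda>(j, k). v $ j * (B *\<^sub>v v) $ k))"
  then have j: "j < n" and k: "k < n" by auto
  have "(mat n n (\<lambda>(j, k). v $ j * v $ k) * B) $$ (j, k) = (\<Sum>l<n. v $ j * (B $$ (k, l) * v $ l))"
    using j k B v symmetric_mat_index[OF B(2,1)]
    by (auto simp: scalar_prod_def lessThan_atLeast0 mult_ac intro!: sum.cong)
  then show "(mat n n (\<lambda>(j, k). v $ j * v $ k) * B) $$ (j, k) = mat n n (\<lambda>(j, k). v $ j * (B *\<^sub>v v) $ k) $$ (j, k)"
    using j k B v by (simp add: scalar_prod_def lessThan_atLeast0 sum_distrib_left)
qed (use B in auto)

text \<open>Sherman--Morrison: with \<open>y = (S - z)\<^sup>-\<^sup>1 u\<close>, the resolvent of the updated matrix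
  maps \<open>u\<close> to \<open>y / (1 + u \<bullet> y)\<close>.\<close>
lemma trace_mat_inv_shifted_rank_one_update:
  fixes u :: "real vec"
  assumes S: "S \<in> carrier_mat p p" "transpose_mat S = S" and u: "u \<in> carrier_vec p" and z: "Im z \<noteq> 0"
  defines "S' \<equiv> S + mat p p (\<lambda>(j, k). u $ j * u $ k)"
    and "y \<equiv> mat_inv (shifted_mat p z S) *\<^sub>v map_vec complex_of_real u"
  shows "mat_trace (mat_inv (shifted_mat p z S)) - mat_trace (mat_inv (shifted_mat p z S'))
           = (\<Sum>i<p. y $ i * y $ i) / (1 + map_vec complex_of_real u \<bullet> y)"
proof -
  let ?uc = "map_vec complex_of_real u"
  define A A' B B' where "A = shifted_mat p z S" and "A' = shifted_mat p z S'"
    and "B = mat_inv A" and "B' = mat_inv A'"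
  define U where "U = mat p p (\<lambda>(j, k). ?uc $ j * ?uc $ k)"
  define y' where "y' = B' *\<^sub>v ?uc"
  define s where "s = ?uc \<bullet> y"
  have "transpose_mat (mat p p (\<lambda>(j, k). u $ j * u $ k)) = mat p p (\<lambda>(j, k). u $ j * u $ k)"
    by (intro eq_matI) (auto simp: mult.commute)
  then have S': "S' \<in> carrier_mat p p" "transpose_mat S' = S'"
    using S unfolding S'_def by (auto simp: transpose_add)
  note inv = mat_inv_shifted_mat[OF S z, folded A_def, folded B_def]
  note inv' = mat_inv_shifted_mat[OF S' z, folded A'_def, folded B'_def]
  have A: "A \<in> carrier_mat p p" "A' \<in> carrier_mat p p" by (simp_all add: A_def A'_def)
  have uc: "?uc \<in> carrier_vec p" using u by simp
  have y: "y \<in> carrier_vec p" and y': "y' \<in> carrier_vec p"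
    using inv(1) inv'(1) uc by (simp_all add: y_def y'_def B_def A_def)
  have yB: "y = B *\<^sub>v ?uc" by (simp add: y_def B_def A_def)
  have A'_eq: "A' = A + U"
    using S(1) u by (intro eq_matI) (auto simp: A_def A'_def S'_def U_def)
  have A'_minus_A: "A' - A = U"
    using A by (intro eq_matI) (auto simp: A'_eq U_def)
  have "mat_trace B - mat_trace B' = (\<Sum>i<p. (B - B') $$ (i, i))"
    using inv(1) inv'(1) by (simp add: mat_trace_def sum_subtractf)
  also have "\<dots> = (\<Sum>i<p. (B * (U * B')) $$ (i, i))"
    using mat_inv_difference[OF _ _ inv(1) inv'(1) inv(3) inv'(2)] A'_minus_A
    by (simp add: A_def A'_def)
  also have "\<dots> = (\<Sum>i<p. y $ i * y' $ i)"
  proof (intro sum.cong refl)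
    fix i assume i: "i \<in> {..<p}"
    have UB': "U * B' = mat p p (\<lambda>(k, j). ?uc $ k * y' $ j)"
      unfolding U_def y'_def by (rule outer_mult_symmetric_mat[OF inv'(1,4) uc])
    have "(B * (U * B')) $$ (i, i) = (\<Sum>k<p. B $$ (i, k) * ?uc $ k) * y' $ i"
      using i inv(1) by (simp add: UB' scalar_prod_def lessThan_atLeast0 sum_distrib_left mult_ac)
    also have "\<dots> = y $ i * y' $ i"
      using i inv(1) uc by (simp add: yB scalar_prod_def lessThan_atLeast0)
    finally show "(B * (U * B')) $$ (i, i) = y $ i * y' $ i" .
  qed
  finally have trace_eq: "mat_trace B - mat_trace B' = (\<Sum>i<p. y $ i * y' $ i)" .
  have Ay: "A *\<^sub>v y = ?uc"
  proof -
    have "A *\<^sub>v y = (A * B) *\<^sub>v ?uc"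
      unfolding yB using A inv(1) uc by (simp add: assoc_mult_mat_vec)
    then show ?thesis using inv(2) uc by simp
  qed
  have Uy: "U *\<^sub>v y = s \<cdot>\<^sub>v ?uc"
    using y uc by (intro eq_vecI) (auto simp: U_def s_def scalar_prod_def lessThan_atLeast0 sum_distrib_left mult_ac)
  have A'y: "A' *\<^sub>v y = (1 + s) \<cdot>\<^sub>v ?uc"
    using uc by (simp add: A'_eq add_mult_distrib_mat_vec[OF A(1) _ y] U_def Ay Uy[unfolded U_def] add_smult_distrib_vec)
  have y_eq: "y = (1 + s) \<cdot>\<^sub>v y'"
  proof -
    have "y = B' *\<^sub>v (A' *\<^sub>v y)"
      using assoc_mult_mat_vec[OF inv'(1) A(2) y] inv'(3) y by simp
    then show ?thesis
      using inv'(1) uc by (simp add: A'y y'_def mult_mat_vec)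
  qed
  have s1: "1 + s \<noteq> 0"
  proof
    assume "1 + s = 0"
    then have "y = 0\<^sub>v p" using y_eq y' by auto
    then have "s = 0" using uc by (simp add: s_def)
    with \<open>1 + s = 0\<close> show False by simp
  qed
  have "y' $ i = y $ i / (1 + s)" if "i < p" for i
    using that y' s1 by (subst y_eq) simp
  then have "(\<Sum>i<p. y $ i * y' $ i) = (\<Sum>i<p. y $ i * y $ i) / (1 + s)"
    by (simp add: sum_divide_distrib)
  then show "mat_trace (mat_inv (shifted_mat p z S)) - mat_trace (mat_inv (shifted_mat p z S'))
      = (\<Sum>i<p. y $ i * y $ i) / (1 + ?uc \<bullet> y)"
    using trace_eq by (simp add: A_def A'_def B_def B'_def s_def)
qed

lemma cmod_trace_mat_inv_shifted_rank_one_update_le: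
  fixes u :: "real vec"
  assumes S: "S \<in> carrier_mat p p" "transpose_mat S = S" and u: "u \<in> carrier_vec p" and z: "Im z > 0"
  shows "cmod (mat_trace (mat_inv (shifted_mat p z S))
           - mat_trace (mat_inv (shifted_mat p z (S + mat p p (\<lambda>(j, k). u $ j * u $ k))))) \<le> 1 / Im z"
proof -
  let ?uc = "map_vec complex_of_real u"
  define y where "y = mat_inv (shifted_mat p z S) *\<^sub>v ?uc"
  define N where "N = (\<Sum>k<p. (cmod (y $ k))\<^sup>2)"
  note update = trace_mat_inv_shifted_rank_one_update[OF S u, of z, folded y_def]
  have "Im (1 + ?uc \<bullet> y) = Im z * N"
    using Im_bilinear_form_mat_inv_shifted_mat[OF S _ u, of z] z by (simp add: y_def N_def)
  then have den: "Im z * N \<le> cmod (1 + ?uc \<bullet> y)"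
    by (metis abs_Im_le_cmod abs_le_D1)
  have num: "cmod (\<Sum>i<p. y $ i * y $ i) \<le> N"
    unfolding N_def using norm_sum[of "\<lambda>i. y $ i * y $ i" "{..<p}"]
    by (simp add: norm_mult power2_eq_square)
  show ?thesis
  proof (cases "N = 0")
    case True
    then show ?thesis using num z update by simp
  next
    case False
    then have "N > 0" unfolding N_def by (simp add: order_neq_le_trans sum_nonneg)
    have "cmod ((\<Sum>i<p. y $ i * y $ i) / (1 + ?uc \<bullet> y)) \<le> N / (Im z * N)"
      unfolding norm_divide using num den z \<open>N > 0\<close> by (intro frac_le) auto
    then show ?thesis using update z \<open>N > 0\<close> by simp
  qed
qed

section \<open>The Stieltjes transform of a sample covariance matrix\<close>

lemma stieltjes_tr_shifted_mat: "stieltjes_tr p M z = mat_trace (mat_inv (shifted_mat p z M)) / of_nat p"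
  by (simp add: stieltjes_tr_def shifted_mat_def)

lemma sample_mat_carrier [simp]: "sample_mat p N R \<in> carrier_mat p p"
  by (simp add: sample_mat_def)

lemma transpose_sample_mat [simp]: "transpose_mat (sample_mat p N R) = sample_mat p N R"
  by (intro eq_matI) (auto simp: sample_mat_def mult.commute)

lemma sample_mat_cong:
  assumes "\<And>i j. i < N \<Longrightarrow> j < p \<Longrightarrow> R i j = R' i j"
  shows "sample_mat p N R = sample_mat p N R'"
  unfolding sample_mat_def using assms by (intro eq_matI) (auto intro!: sum.cong)

lemma sample_mat_remove:
  assumes "i < N"
  shows "sample_mat p N R = mat p p (\<lambda>(j, k). \<Sum>l\<in>{..<N} - {i}. R l j * R l k)
           + mat p p (\<lambda>(j, k). vec p (R i) $ j * vec p (R i) $ k)"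
  using assms by (intro eq_matI) (auto simp: sample_mat_def sum.remove[of "{..<N}" i])

lemma cmod_stieltjes_tr_le:
  assumes "S \<in> carrier_mat p p" "transpose_mat S = S" and z: "Im z > 0"
  shows "cmod (stieltjes_tr p S z) \<le> 1 / Im z"
proof (cases "p = 0")
  case False
  have "cmod (stieltjes_tr p S z) = cmod (mat_trace (mat_inv (shifted_mat p z S))) / real p"
    by (simp add: stieltjes_tr_shifted_mat norm_divide)
  also have "\<dots> \<le> (real p / Im z) / real p"
    by (intro divide_right_mono cmod_trace_mat_inv_shifted_mat_le assms) simp
  finally show ?thesis using False by simp
qed (use z in \<open>simp add: stieltjes_tr_def\<close>)

text \<open>Changing one sample vector is a rank-two perturbation of the sample matrix.\<close>
lemma cmod_stieltjes_tr_sample_update_le: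
  assumes z: "Im z > 0" and i: "i < N"
  shows "cmod (stieltjes_tr p (sample_mat p N R) z - stieltjes_tr p (sample_mat p N (R(i := w))) z)
           \<le> 2 / (real p * Im z)"
proof -
  define S where "S = mat p p (\<lambda>(j, k). \<Sum>l\<in>{..<N} - {i}. R l j * R l k)"
  define T where "T M = mat_trace (mat_inv (shifted_mat p z M))" for M
  have S: "S \<in> carrier_mat p p" "transpose_mat S = S"
    unfolding S_def by (auto intro!: eq_matI simp: mult.commute)
  have R: "sample_mat p N R = S + mat p p (\<lambda>(j, k). vec p (R i) $ j * vec p (R i) $ k)"
    unfolding S_def by (rule sample_mat_remove[OF i])
  have Rw: "sample_mat p N (R(i := w)) = S + mat p p (\<lambda>(j, k). vec p w $ j * vec p w $ k)"
    unfolding S_def using sample_mat_remove[OF i, of p "R(i := w)"] by simp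
  have "T (sample_mat p N R) - T (sample_mat p N (R(i := w)))
      = (T S - T (sample_mat p N (R(i := w)))) - (T S - T (sample_mat p N R))"
    by simp
  then have "cmod (T (sample_mat p N R) - T (sample_mat p N (R(i := w))))
      \<le> cmod (T S - T (sample_mat p N (R(i := w)))) + cmod (T S - T (sample_mat p N R))"
    using norm_triangle_ineq4 by metis
  also have "\<dots> \<le> 1 / Im z + 1 / Im z"
    unfolding R Rw T_def by (intro add_mono cmod_trace_mat_inv_shifted_rank_one_update_le S z) auto
  finally have "cmod (T (sample_mat p N R) - T (sample_mat p N (R(i := w)))) / real p \<le> (2 / Im z) / real p"
    by (intro divide_right_mono) auto
  moreover have "stieltjes_tr p (sample_mat p N R) z - stieltjes_tr p (sample_mat p N (R(i := w))) z
      = (T (sample_mat p N R) - T (sample_mat p N (R(i := w)))) / of_nat p"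
    by (simp add: stieltjes_tr_shifted_mat T_def diff_divide_distrib)
  ultimately show ?thesis by (simp add: norm_divide mult.commute)
qed

lemma borel_measurable_det:
  fixes A :: "'a \<Rightarrow> complex mat"
  assumes A: "\<And>x. A x \<in> carrier_mat d d"
    and entries: "\<And>j k. j < d \<Longrightarrow> k < d \<Longrightarrow> (\<lambda>x. A x $$ (j, k)) \<in> borel_measurable M"
  shows "(\<lambda>x. det (A x)) \<in> borel_measurable M"
proof -
  have "(\<lambda>x. det (A x)) = (\<lambda>x. \<Sum>\<pi> | \<pi> permutes {0..<d}. signof \<pi> * (\<Prod>i = 0..<d. A x $$ (i, \<pi> i)))"
    by (rule ext) (rule det_def'[OF A])
  also have "\<dots> \<in> borel_measurable M"
  proof (intro borel_measurable_sum borel_measurable_times borel_measurable_const borel_measurable_prod)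
    fix \<pi> i assume "\<pi> \<in> {\<pi>. \<pi> permutes {0..<d}}" "i \<in> {0..<d}"
    then show "(\<lambda>x. A x $$ (i, \<pi> i)) \<in> borel_measurable M"
      by (intro entries) (auto dest: permutes_in_image)
  qed
  finally show ?thesis .
qed

lemma borel_measurable_mat_trace_mat_inv:
  fixes A :: "'a \<Rightarrow> complex mat"
  assumes A: "\<And>x. A x \<in> carrier_mat d d" and det: "\<And>x. det (A x) \<noteq> 0"
    and entries: "\<And>j k. j < d \<Longrightarrow> k < d \<Longrightarrow> (\<lambda>x. A x $$ (j, k)) \<in> borel_measurable M"
  shows "(\<lambda>x. mat_trace (mat_inv (A x))) \<in> borel_measurable M"
proof -
  have "mat_trace (mat_inv (A x)) = (\<Sum>i<d. (1 / det (A x)) * det (mat_delete (A x) i i))" for x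
    using A[of x] by (simp add: mat_inv_adj_mat[OF A det] mat_trace_def adj_mat_def cofactor_def)
  moreover have "(\<lambda>x. det (mat_delete (A x) i i)) \<in> borel_measurable M" for i
  proof (rule borel_measurable_det)
    show "mat_delete (A x) i i \<in> carrier_mat (d - 1) (d - 1)" for x
      using mat_delete_carrier[OF A] .
    fix j k assume "j < d - 1" "k < d - 1"
    then have "(\<lambda>x. A x $$ (if j < i then j else Suc j, if k < i then k else Suc k)) \<in> borel_measurable M"
      by (intro entries) auto
    moreover have "mat_delete (A x) i i $$ (j, k) = A x $$ (if j < i then j else Suc j, if k < i then k else Suc k)" for x
      using A[of x] \<open>j < d - 1\<close> \<open>k < d - 1\<close> by (simp add: mat_delete_def)
    ultimately show "(\<lambda>x. mat_delete (A x) i i $$ (j, k)) \<in> borel_measurable M" by simp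
  qed
  ultimately show ?thesis
    using borel_measurable_det[OF A entries] by simp
qed

lemma borel_measurable_stieltjes_tr_sample:
  assumes z: "Im z \<noteq> 0"
  shows "(\<lambda>x. stieltjes_tr p (sample_mat p N x) z)
           \<in> borel_measurable (PiM {..<N} (\<lambda>_. PiM {..<p} (\<lambda>_. borel :: real measure)))"
proof -
  let ?Q = "PiM {..<p} (\<lambda>_. borel :: real measure)"
  let ?M = "PiM {..<N} (\<lambda>_. ?Q)"
  have coord: "(\<lambda>x. x i j) \<in> borel_measurable ?M" if "i < N" "j < p" for i j
  proof -
    have "(\<lambda>x. x i) \<in> measurable ?M ?Q" "(\<lambda>y. y j) \<in> borel_measurable ?Q"
      using that by (simp_all add: measurable_component_singleton)
    then show ?thesis by (rule measurable_compose)
  qed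
  have "(\<lambda>x. mat_trace (mat_inv (shifted_mat p z (sample_mat p N x)))) \<in> borel_measurable ?M"
  proof (rule borel_measurable_mat_trace_mat_inv)
    show "det (shifted_mat p z (sample_mat p N x)) \<noteq> 0" for x
      using det_shifted_mat_nonzero z by simp
    fix j k assume "j < p" "k < p"
    then show "(\<lambda>x. shifted_mat p z (sample_mat p N x) $$ (j, k)) \<in> borel_measurable ?M"
      using coord by (simp add: sample_mat_def)
  qed simp
  then show ?thesis by (simp add: stieltjes_tr_shifted_mat)
qed

section \<open>Almost sure convergence from tail bounds\<close>

lemma summable_exp_neg_ln_powr:
  fixes c \<alpha> :: real
  assumes "c > 0" "\<alpha> > 0"
  shows "summable (\<lambda>n::nat. exp (- c * ln (real n) powr (1 + \<alpha>)))"
proof (rule summable_comparison_test_bigo)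
  show "summable (\<lambda>n. norm (1 / real n ^ 2))"
    using inverse_power_summable[of 2, where 'a = real] by (simp add: divide_inverse)
  show "(\<lambda>n::nat. exp (- c * ln (real n) powr (1 + \<alpha>))) \<in> O(\<lambda>n. 1 / real n ^ 2)"
    using assms by real_asymp
qed

lemma (in prob_space) AE_tendsto_zero_of_summable_tails:
  fixes X :: "nat \<Rightarrow> 'a \<Rightarrow> 'b::real_normed_vector"
  assumes X: "\<And>n. X n \<in> borel_measurable M"
    and tails: "\<And>\<epsilon>. \<epsilon> > 0 \<Longrightarrow> summable (\<lambda>n. prob {\<omega> \<in> space M. \<epsilon> \<le> norm (X n \<omega>)})"
  shows "AE \<omega> in M. (\<lambda>n. X n \<omega>) \<longlonglongrightarrow> 0"
proof -
  have "AE \<omega> in M. eventually (\<lambda>n. norm (X n \<omega>) < \<epsilon>) sequentially" if "\<epsilon> > 0" for \<epsilon>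
  proof -
    have "AE \<omega> in M. eventually (\<lambda>n. \<omega> \<in> space M - {\<omega> \<in> space M. \<epsilon> \<le> norm (X n \<omega>)}) sequentially"
      using X tails[OF that] by (intro borel_cantelli_AE1) (auto simp: emeasure_eq_measure)
    then show ?thesis
      by (rule AE_mp) (auto intro!: AE_I2 elim: eventually_mono)
  qed
  then have "AE \<omega> in M. \<forall>k::nat. eventually (\<lambda>n. norm (X n \<omega>) < 1 / Suc k) sequentially"
    by (subst AE_all_countable) auto
  then show ?thesis
  proof (rule AE_mp, intro AE_I2 impI)
    fix \<omega> assume small: "\<forall>k::nat. eventually (\<lambda>n. norm (X n \<omega>) < 1 / Suc k) sequentially"
    show "(\<lambda>n. X n \<omega>) \<longlonglongrightarrow> 0"
    proof (rule tendstoI)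
      fix e :: real assume "e > 0"
      then obtain k where k: "1 / Suc k < e" using reals_Archimedean by (auto simp: divide_inverse)
      show "eventually (\<lambda>n. dist (X n \<omega>) 0 < e) sequentially"
        using small[rule_format, of k] by eventually_elim (use k in auto)
    qed
  qed
qed

lemma (in prob_space) AE_scaled_tendsto_zero_of_subgaussian_tails:
  fixes D :: "nat \<Rightarrow> 'a \<Rightarrow> 'b::real_normed_vector"
  assumes D: "\<And>p. D p \<in> borel_measurable M" and K: "K > 0" and \<alpha>: "\<alpha> > 0"
    and tails: "\<And>p t. p \<ge> 1 \<Longrightarrow> t > 0 \<Longrightarrow> prob {\<omega> \<in> space M. t \<le> norm (D p \<omega>)} \<le> C * exp (- K * t\<^sup>2 * real p)"
  shows "AE \<omega> in M. (\<lambda>p. sqrt (real p) / ln (real p) powr ((1 + \<alpha>) / 2) * norm (D p \<omega>)) \<longlonglongrightarrow> 0"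
proof -
  define a where "a p = sqrt (real p) / ln (real p) powr ((1 + \<alpha>) / 2)" for p :: nat
  have "AE \<omega> in M. (\<lambda>p. a p * norm (D p \<omega>)) \<longlonglongrightarrow> 0"
  proof (rule AE_tendsto_zero_of_summable_tails)
    show "(\<lambda>\<omega>. a p * norm (D p \<omega>)) \<in> borel_measurable M" for p
      using D by measurable
    fix \<epsilon> :: real assume \<epsilon>: "\<epsilon> > 0"
    have bound: "prob {\<omega> \<in> space M. \<epsilon> \<le> norm (a p * norm (D p \<omega>))}
        \<le> C * exp (- (K * \<epsilon>\<^sup>2) * ln (real p) powr (1 + \<alpha>))" if p: "p \<ge> 2" for p
    proof -
      have ln: "ln (real p) > 0" using p by simp
      then have a: "a p > 0" using p by (simp add: a_def)
      have exponent: "K * (\<epsilon> / a p)\<^sup>2 * real p = K * \<epsilon>\<^sup>2 * ln (real p) powr (1 + \<alpha>)"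
      proof -
        have "(a p)\<^sup>2 = real p / ln (real p) powr (1 + \<alpha>)"
          using ln by (simp add: a_def power_divide power2_eq_square powr_add[symmetric])
        then show ?thesis
          using p a by (simp add: power_divide)
      qed
      have "{\<omega> \<in> space M. \<epsilon> \<le> norm (a p * norm (D p \<omega>))} = {\<omega> \<in> space M. \<epsilon> / a p \<le> norm (D p \<omega>)}"
        using a by (simp add: pos_divide_le_eq mult.commute)
      also have "prob \<dots> \<le> C * exp (- K * (\<epsilon> / a p)\<^sup>2 * real p)"
        using p \<epsilon> a by (intro tails) auto
      finally show ?thesis using exponent by simp
    qed
    show "summable (\<lambda>p. prob {\<omega> \<in> space M. \<epsilon> \<le> norm (a p * norm (D p \<omega>))})"
    proof (rule summable_comparison_test_ev)
      show "eventually (\<lambda>p. norm (prob {\<omega> \<in> space M. \<epsilon> \<le> norm (a p * norm (D p \<omega>))})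
          \<le> C * exp (- (K * \<epsilon>\<^sup>2) * ln (real p) powr (1 + \<alpha>))) sequentially"
        using eventually_ge_at_top[of 2] by eventually_elim (use bound in simp)
      show "summable (\<lambda>p. C * exp (- (K * \<epsilon>\<^sup>2) * ln (real p) powr (1 + \<alpha>)))"
        using K \<epsilon> \<alpha> by (intro summable_mult summable_exp_neg_ln_powr) auto
    qed
  qed
  then show ?thesis by (simp add: a_def)
qed

lemma tendsto_zero_if_scaled_tendsto_zero:
  fixes f :: "nat \<Rightarrow> 'b::real_normed_vector"
  assumes "filterlim a at_top sequentially" and "(\<lambda>n. a n * norm (f n)) \<longlonglongrightarrow> 0"
  shows "f \<longlonglongrightarrow> 0"
proof (rule Lim_null_comparison[OF _ assms(2)])
  have "eventually (\<lambda>n. 1 \<le> a n) sequentially"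
    using assms(1) by (simp add: filterlim_at_top)
  then show "eventually (\<lambda>n. norm (f n) \<le> a n * norm (f n)) sequentially"
    by eventually_elim (metis mult_1 mult_right_mono norm_ge_zero)
qed

lemma (in prob_space) AE_tendsto_zero_of_subgaussian_tails:
  fixes D :: "nat \<Rightarrow> 'a \<Rightarrow> 'b::real_normed_vector"
  assumes D: "\<And>p. D p \<in> borel_measurable M" and K: "K > 0"
    and tails: "\<And>p t. p \<ge> 1 \<Longrightarrow> t > 0 \<Longrightarrow> prob {\<omega> \<in> space M. t \<le> norm (D p \<omega>)} \<le> C * exp (- K * t\<^sup>2 * real p)"
  shows "AE \<omega> in M. (\<lambda>p. D p \<omega>) \<longlonglongrightarrow> 0"
proof -
  have lim: "filterlim (\<lambda>p::nat. sqrt (real p) / ln (real p) powr ((1 + 1) / 2)) at_top sequentially"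
    by real_asymp
  have "AE \<omega> in M. (\<lambda>p. sqrt (real p) / ln (real p) powr ((1 + 1) / 2) * norm (D p \<omega>)) \<longlonglongrightarrow> 0"
    by (rule AE_scaled_tendsto_zero_of_subgaussian_tails[OF D K _ tails]) simp_all
  then show ?thesis
  proof (rule AE_mp, intro AE_I2 impI)
    fix \<omega> assume "(\<lambda>p. sqrt (real p) / ln (real p) powr ((1 + 1) / 2) * norm (D p \<omega>)) \<longlonglongrightarrow> 0"
    then show "(\<lambda>p. D p \<omega>) \<longlonglongrightarrow> 0" by (rule tendsto_zero_if_scaled_tendsto_zero[OF lim])
  qed
qed

section \<open>Concentration of the Stieltjes transform\<close>

lemma (in prob_space) stieltjes_tr_sample_measurable:
  fixes r :: "nat \<Rightarrow> 'a \<Rightarrow> nat \<Rightarrow> real"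
  assumes indep: "indep_vars (\<lambda>_. PiM {..<p} (\<lambda>_. borel)) (\<lambda>i \<omega>. restrict (r i \<omega>) {..<p}) {..<N}"
    and z: "Im z \<noteq> 0"
  shows "(\<lambda>\<omega>. stieltjes_tr p (sample_mat p N (\<lambda>i. r i \<omega>)) z) \<in> borel_measurable M"
proof -
  have Y: "(\<lambda>\<omega>. \<lambda>i\<in>{..<N}. restrict (r i \<omega>) {..<p})
      \<in> measurable M (PiM {..<N} (\<lambda>_. PiM {..<p} (\<lambda>_. borel)))"
    by (rule measurable_restrict) (use indep in \<open>auto simp: indep_vars_def\<close>)
  have "sample_mat p N (\<lambda>i\<in>{..<N}. restrict (r i \<omega>) {..<p}) = sample_mat p N (\<lambda>i. r i \<omega>)" for \<omega>
    by (rule sample_mat_cong) simp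
  then show ?thesis
    using measurable_compose[OF Y borel_measurable_stieltjes_tr_sample[OF z]] by simp
qed

lemma (in prob_space) stieltjes_tr_sample_concentration:
  fixes r :: "nat \<Rightarrow> 'a \<Rightarrow> nat \<Rightarrow> real"
  assumes indep: "indep_vars (\<lambda>_. PiM {..<p} (\<lambda>_. borel)) (\<lambda>i \<omega>. restrict (r i \<omega>) {..<p}) {..<N}"
    and z: "Im z > 0" and N: "N > 0" and p: "p > 0" and t: "t > 0"
  defines "m \<equiv> \<lambda>\<omega>. stieltjes_tr p (sample_mat p N (\<lambda>i. r i \<omega>)) z"
  shows "prob {\<omega> \<in> space M. t \<le> cmod (m \<omega> - expectation m)}
           \<le> 4 * exp (- (t\<^sup>2 * (real p)\<^sup>2 * (Im z)\<^sup>2 / (32 * real N)))"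
proof -
  define F where "F x = stieltjes_tr p (sample_mat p N x) z" for x :: "nat \<Rightarrow> nat \<Rightarrow> real"
  have m: "m = (\<lambda>\<omega>. F (\<lambda>i\<in>{..<N}. restrict (r i \<omega>) {..<p}))"
    unfolding m_def F_def by (intro ext arg_cong[where f = "\<lambda>M. stieltjes_tr p M z"] sample_mat_cong) simp
  have bd: "bounded_differences {..<N} (\<lambda>_. PiM {..<p} (\<lambda>_. borel)) (\<lambda>_. 2 / (real p * Im z)) F"
    unfolding bounded_differences_def F_def using z by (auto intro: cmod_stieltjes_tr_sample_update_le)
  have F: "F \<in> borel_measurable (PiM {..<N} (\<lambda>_. PiM {..<p} (\<lambda>_. borel)))"
    unfolding F_def using borel_measurable_stieltjes_tr_sample z by simp
  have F_bound: "cmod (F x) \<le> 1 / Im z" for x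
    unfolding F_def by (rule cmod_stieltjes_tr_le[OF sample_mat_carrier transpose_sample_mat z])
  have "prob {\<omega> \<in> space M. t \<le> cmod (m \<omega> - expectation m)}
      \<le> 4 * exp (- t\<^sup>2 / (8 * (\<Sum>i<N. (2 / (real p * Im z))\<^sup>2)))"
    unfolding m using z N p
    by (intro McDiarmid_inequality_indep_complex[OF indep F F_bound bd _ t]) auto
  also have "- t\<^sup>2 / (8 * (\<Sum>i<N. (2 / (real p * Im z))\<^sup>2)) = - (t\<^sup>2 * (real p)\<^sup>2 * (Im z)\<^sup>2 / (32 * real N))"
    using z p N by (simp add: power_divide power_mult_distrib)
  finally show ?thesis .
qed

lemma (in prob_space) stieltjes_tr_sample_tail:
  fixes r :: "nat \<Rightarrow> 'a \<Rightarrow> nat \<Rightarrow> real"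
  assumes indep: "indep_vars (\<lambda>_. PiM {..<p} (\<lambda>_. borel)) (\<lambda>i \<omega>. restrict (r i \<omega>) {..<p}) {..<N}"
    and z: "Im z > 0" and c: "c > 0" "c \<le> real p / real N" and t: "t > 0"
  defines "m \<equiv> \<lambda>\<omega>. stieltjes_tr p (sample_mat p N (\<lambda>i. r i \<omega>)) z"
  shows "prob {\<omega> \<in> space M. t \<le> cmod (m \<omega> - expectation m)} \<le> 4 * exp (- (c * (Im z)\<^sup>2 / 32) * t\<^sup>2 * real p)"
proof -
  have "N > 0" "p > 0"
    using c by (auto intro!: gr0I)
  then have "prob {\<omega> \<in> space M. t \<le> cmod (m \<omega> - expectation m)}
      \<le> 4 * exp (- (t\<^sup>2 * (real p)\<^sup>2 * (Im z)\<^sup>2 / (32 * real N)))"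
    unfolding m_def using z t by (intro stieltjes_tr_sample_concentration[OF indep])
  also have "\<dots> \<le> 4 * exp (- (c * (Im z)\<^sup>2 / 32) * t\<^sup>2 * real p)"
  proof -
    have "(c * (Im z)\<^sup>2 / 32) * t\<^sup>2 * real p \<le> (real p / real N) * (Im z)\<^sup>2 / 32 * t\<^sup>2 * real p"
      using c by (intro mult_right_mono divide_right_mono) auto
    also have "\<dots> = t\<^sup>2 * (real p)\<^sup>2 * (Im z)\<^sup>2 / (32 * real N)"
      by (simp add: power2_eq_square mult_ac)
    finally show ?thesis by simp
  qed
  finally show ?thesis .
qed

theorem corollary2:
  fixes P :: "'a measure"
    and n :: "nat \<Rightarrow> nat"
    and r :: "nat \<Rightarrow> nat \<Rightarrow> 'a \<Rightarrow> (nat \<Rightarrow> real)"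
  assumes "prob_space P"
    and indep: "\<And>p. prob_space.indep_vars P (\<lambda>_. PiM {..<p} (\<lambda>_. borel))
                  (\<lambda>i \<omega>. restrict (r p i \<omega>) {..<p}) {..<n p}"
    and ratio: "\<exists>c>0. \<forall>p\<ge>1. real p / real (n p) \<ge> c"
  defines "m \<equiv> \<lambda>p z \<omega>. stieltjes_tr p (sample_mat p (n p) (\<lambda>i. r p i \<omega>)) z"
  shows "\<forall>z. Im z > 0 \<longrightarrow>
           (AE \<omega> in P. ((\<lambda>p. m p z \<omega> - integral\<^sup>L P (m p z)) \<longlonglongrightarrow> 0)) \<and>
           (\<forall>\<alpha>>0. AE \<omega> in P.
              ((\<lambda>p. sqrt (real p) / (ln (real p)) powr ((1 + \<alpha>) / 2)
                     * cmod (m p z \<omega> - integral\<^sup>L P (m p z))) \<longlonglongrightarrow> 0))"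
proof (intro allI impI)
  fix z :: complex assume z: "Im z > 0"
  interpret prob_space P by fact
  obtain c where c: "c > 0" and ratio_c: "\<And>p. p \<ge> 1 \<Longrightarrow> c \<le> real p / real (n p)"
    using ratio by auto
  define D where "D p \<omega> = m p z \<omega> - expectation (m p z)" for p \<omega>
  have D: "D p \<in> borel_measurable P" for p
    unfolding D_def m_def using stieltjes_tr_sample_measurable[OF indep] z by simp
  have K: "c * (Im z)\<^sup>2 / 32 > 0" using c z by simp
  have tails: "prob {\<omega> \<in> space P. t \<le> norm (D p \<omega>)} \<le> 4 * exp (- (c * (Im z)\<^sup>2 / 32) * t\<^sup>2 * real p)"
    if "p \<ge> 1" "t > 0" for p t
    unfolding D_def m_def using that c z ratio_c by (intro stieltjes_tr_sample_tail[OF indep]) auto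
  show "(AE \<omega> in P. (\<lambda>p. m p z \<omega> - integral\<^sup>L P (m p z)) \<longlonglongrightarrow> 0) \<and>
      (\<forall>\<alpha>>0. AE \<omega> in P. (\<lambda>p. sqrt (real p) / ln (real p) powr ((1 + \<alpha>) / 2)
         * cmod (m p z \<omega> - integral\<^sup>L P (m p z))) \<longlonglongrightarrow> 0)"
    using AE_tendsto_zero_of_subgaussian_tails[OF D K tails]
      AE_scaled_tendsto_zero_of_subgaussian_tails[OF D K _ tails]
    unfolding D_def by simp
qed

end
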